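(* Consider the continuous-time system $\dot x=Ax+Bu+Lf(t,z)$, $z=Hx$, with $A,B$ unknown, $L\in\mathbb{R}^{n\times p}$ and $H\in\mathbb{R}^{p\times n}$ known, and data $U_0,X_0,X_1,F_0$ (with $X_1$ containing sampled state derivatives) satisfying $X_1=AX_0+BU_0+LF_0$. Suppose there exists $Y\in\mathbb{R}^{T\times n}$ such that $X_0Y$ is symmetric positive definite, $Y^\top(X_1-LF_0)^\top+(X_1-LF_0)Y\prec 0$, and $L+X_0YH^\top=0$. Then with $K=U_0Y(X_0Y)^{-1}$ the origin of the closed-loop system $\dot x=(A+BK)x+Lf(t,Hx)$ is globally uniformly asymptotically stable for every passive nonlinearity $f$, i.e. every $f:\mathbb{R}\times\mathbb{R}^p\to\mathbb{R}^p$ (piecewise continuous in $t$, locally Lipschitz in $z$) with $z^\top f(t,z)\ge 0$ for all $t,z$.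
   Context: Data: $U_0=[u(t_0)\cdots u(t_{T-1})]$, $X_0=[x(t_0)\cdots x(t_{T-1})]$, $X_1=[\dot x(t_0)\cdots\dot x(t_{T-1})]$, $F_0=[f(t_0,z(t_0))\cdots f(t_{T-1},z(t_{T-1}))]$ from an experiment on the system. *)

theory Defs
  imports "HOL-Analysis.Analysis"
begin

text \<open>Matrices are HOL-Analysis Cartesian matrices: an r x c real matrix has type
  real^'c^'r; matrix product is (**), matrix-vector product is (*v).\<close>

definition pos_def_mat :: "real^'n^'n \<Rightarrow> bool" where
  "pos_def_mat M \<longleftrightarrow> (\<forall>v. v \<noteq> 0 \<longrightarrow> v \<bullet> (M *v v) > 0)"

definition sym_pos_def_mat :: "real^'n^'n \<Rightarrow> bool" where
  "sym_pos_def_mat M \<longleftrightarrow> transpose M = M \<and> pos_def_mat M"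

definition neg_def_mat :: "real^'n^'n \<Rightarrow> bool" where
  "neg_def_mat M \<longleftrightarrow> (\<forall>v. v \<noteq> 0 \<longrightarrow> v \<bullet> (M *v v) < 0)"

definition piecewise_continuous_in_t :: "(real \<Rightarrow> 'a::real_normed_vector \<Rightarrow> 'b::real_normed_vector) \<Rightarrow> bool" where
  "piecewise_continuous_in_t f \<longleftrightarrow>
     (\<forall>z a b. \<exists>S. finite S \<and>
        (\<forall>t\<in>{a..b} - S. continuous (at t) (\<lambda>s. f s z)) \<and>
        (\<forall>t\<in>S. (\<exists>l. ((\<lambda>s. f s z) \<longlongrightarrow> l) (at_left t)) \<and>
                 (\<exists>r. ((\<lambda>s. f s z) \<longlongrightarrow> r) (at_right t))))"

definition locally_lipschitz_in_z :: "(real \<Rightarrow> 'a::real_normed_vector \<Rightarrow> 'b::real_normed_vector) \<Rightarrow> bool" where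
  "locally_lipschitz_in_z f \<longleftrightarrow>
     (\<forall>t z. \<exists>\<delta>>0. \<exists>C. \<forall>s\<in>{t-\<delta>..t+\<delta>}. \<forall>z1\<in>ball z \<delta>. \<forall>z2\<in>ball z \<delta>.
         norm (f s z1 - f s z2) \<le> C * norm (z1 - z2))"

definition is_solution :: "(real \<Rightarrow> 'n::euclidean_space \<Rightarrow> 'n) \<Rightarrow> real \<Rightarrow> real \<Rightarrow> (real \<Rightarrow> 'n) \<Rightarrow> bool" where
  "is_solution F t0 t1 x \<longleftrightarrow> t0 \<le> t1 \<and> continuous_on {t0..t1} x \<and>
     (\<exists>S. finite S \<and> (\<forall>t\<in>{t0..t1} - S.
        (x has_vector_derivative F t (x t)) (at t within {t0..t1})))"

text \<open>Global uniform asymptotic stability of the origin (Khalil, Def. 4.4):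
  uniform stability, uniform boundedness and global uniform attractivity,
  required of every solution on every compact forward interval.\<close>
definition GUAS :: "(real \<Rightarrow> 'n::euclidean_space \<Rightarrow> 'n) \<Rightarrow> bool" where
  "GUAS F \<longleftrightarrow>
    (\<forall>\<epsilon>>0. \<exists>\<delta>>0. \<forall>t0 t1 x. is_solution F t0 t1 x \<and> norm (x t0) < \<delta> \<longrightarrow>
        (\<forall>t\<in>{t0..t1}. norm (x t) < \<epsilon>)) \<and>
    (\<forall>a>0. \<exists>c. \<forall>t0 t1 x. is_solution F t0 t1 x \<and> norm (x t0) < a \<longrightarrow>
        (\<forall>t\<in>{t0..t1}. norm (x t) < c)) \<and>
    (\<forall>a>0. \<forall>\<epsilon>>0. \<exists>T\<ge>0. \<forall>t0 t1 x. is_solution F t0 t1 x \<and> norm (x t0) < a \<longrightarrow>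
        (\<forall>t\<in>{t0..t1}. t \<ge> t0 + T \<longrightarrow> norm (x t) < \<epsilon>))"

end

theory Submission imports Defs begin

text \<open>With \<open>P = X\<^sub>0 Y\<close> and \<open>K = U\<^sub>0 Y P\<^sup>-\<^sup>1\<close> the data equation gives
  \<open>(A + B K) P = (X\<^sub>1 - L F\<^sub>0) Y\<close>, and \<open>L = -P H\<^sup>T\<close>. Hence along the closed loop the
  quadratic function \<open>V x = x\<^sup>T P\<^sup>-\<^sup>1 x\<close> satisfies, with \<open>w = P\<^sup>-\<^sup>1 x\<close>,
  \<open>V' = w\<^sup>T (Y\<^sup>T (X\<^sub>1 - L F\<^sub>0)\<^sup>T + (X\<^sub>1 - L F\<^sub>0) Y) w - 2 (H x)\<^sup>T f(t, H x)\<close>.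
  The first term is negative definite by the LMI and the second is nonpositive by passivity,
  so \<open>V' \<le> -c V\<close>; exponential decay of \<open>V\<close> along every solution gives global uniform
  (even exponential) stability.\<close>

lemma inner_matrix_vector_mult_transpose:
  fixes A :: "real^'m^'n"
  shows "a \<bullet> (A *v b) = (transpose A *v a) \<bullet> b"
  by (simp add: dot_lmul_matrix)

lemma uminus_matrix_vector_mult:
  fixes A :: "real^'m^'n"
  shows "(- A) *v v = - (A *v v)"
  by (simp add: matrix_vector_mult_def vec_eq_iff sum_negf)

lemma pos_def_mat_quadratic_lower_bound:
  fixes M :: "real^'n^'n"
  assumes "pos_def_mat M"
  shows "\<exists>a>0. \<forall>v. a * (norm v)^2 \<le> v \<bullet> (M *v v)"
proof -
  have cont: "continuous_on (sphere 0 1) (\<lambda>v. v \<bullet> (M *v v))"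
    by (intro continuous_intros)
  obtain u where u: "u \<in> sphere 0 1"
    and umin: "\<And>v. v \<in> sphere 0 1 \<Longrightarrow> u \<bullet> (M *v u) \<le> v \<bullet> (M *v v)"
    using continuous_attains_inf[OF compact_sphere _ cont] by fastforce
  have "u \<noteq> 0" using u by auto
  then have upos: "u \<bullet> (M *v u) > 0"
    using assms unfolding pos_def_mat_def by blast
  show ?thesis
  proof (intro exI[of _ "u \<bullet> (M *v u)"] conjI allI upos)
    fix v :: "real^'n"
    show "u \<bullet> (M *v u) * (norm v)^2 \<le> v \<bullet> (M *v v)"
    proof (cases "v = 0")
      case False
      define w where "w = (1 / norm v) *\<^sub>R v"
      have w: "w \<in> sphere 0 1" using False by (simp add: w_def)
      have vw: "v = norm v *\<^sub>R w" using False by (simp add: w_def)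
      have "v \<bullet> (M *v v) = (norm v)^2 * (w \<bullet> (M *v w))"
        by (subst (1 2) vw) (simp add: matrix_vector_mult_scaleR power2_eq_square)
      then show ?thesis using umin[OF w]
        by (metis mult.commute mult_right_mono zero_le_power2)
    qed simp
  qed
qed

lemma neg_def_mat_quadratic_upper_bound:
  fixes N :: "real^'n^'n"
  assumes "neg_def_mat N"
  shows "\<exists>a>0. \<forall>v. v \<bullet> (N *v v) \<le> - a * (norm v)^2"
proof -
  have "pos_def_mat (- N)"
    using assms by (simp add: pos_def_mat_def neg_def_mat_def uminus_matrix_vector_mult)
  then obtain a where a: "a > 0" "\<And>v. a * (norm v)^2 \<le> - (v \<bullet> (N *v v))"
    using pos_def_mat_quadratic_lower_bound[of "- N"] by (auto simp: uminus_matrix_vector_mult)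
  then show ?thesis
    by (intro exI[of _ a]) (auto simp: le_minus_iff)
qed

lemma quadratic_form_upper_bound:
  fixes M :: "real^'n^'n"
  shows "\<exists>b>0. \<forall>v. v \<bullet> (M *v v) \<le> b * (norm v)^2"
proof -
  obtain K where K: "K > 0" "\<And>x. norm (M *v x) \<le> norm x * K"
    using bounded_linear.pos_bounded[OF matrix_vector_mul_bounded_linear[of M]] by blast
  show ?thesis
  proof (intro exI[of _ K] conjI allI K)
    fix v :: "real^'n"
    have "v \<bullet> (M *v v) \<le> norm v * norm (M *v v)" by (rule norm_cauchy_schwarz)
    also have "\<dots> \<le> norm v * (norm v * K)" by (intro mult_left_mono K) simp
    finally show "v \<bullet> (M *v v) \<le> K * (norm v)^2" by (simp add: power2_eq_square mult_ac)
  qed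
qed

lemma pos_def_mat_invertible:
  fixes P :: "real^'n^'n"
  assumes "pos_def_mat P"
  shows "invertible P"
proof -
  have "\<forall>x. P *v x = 0 \<longrightarrow> x = 0"
    using assms unfolding pos_def_mat_def
    by (metis inner_zero_right less_irrefl)
  then show ?thesis
    using matrix_left_invertible_ker invertible_left_inverse by blast
qed

lemma matrix_inv_mult_cancel:
  fixes P :: "real^'n^'n"
  assumes "invertible P"
  shows "P ** matrix_inv P = mat 1" and "matrix_inv P ** P = mat 1"
  using assms unfolding matrix_inv_def invertible_def by (metis (mono_tags, lifting) someI_ex)+

lemma sym_pos_def_mat_matrix_inv:
  fixes P :: "real^'n^'n"
  assumes "sym_pos_def_mat P"
  shows "sym_pos_def_mat (matrix_inv P)"
proof -
  define Q where "Q = matrix_inv P"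
  have Psym: "transpose P = P" and Ppos: "\<And>v. v \<noteq> 0 \<Longrightarrow> v \<bullet> (P *v v) > 0"
    using assms unfolding sym_pos_def_mat_def pos_def_mat_def by auto
  have PQ: "P ** Q = mat 1"
    using matrix_inv_mult_cancel pos_def_mat_invertible assms
    unfolding sym_pos_def_mat_def Q_def by blast
  have "transpose Q ** P = mat 1"
    using PQ Psym by (metis matrix_transpose_mul transpose_mat)
  then have Qsym: "transpose Q = Q"
    using PQ by (metis matrix_mul_assoc matrix_mul_lid matrix_mul_rid)
  have PQx: "P *v (Q *v x) = x" for x
    using PQ by (simp add: matrix_vector_mul_assoc)
  have "x \<bullet> (Q *v x) > 0" if "x \<noteq> 0" for x
  proof -
    have "Q *v x \<noteq> 0" using that PQx[of x] by force
    then have "(Q *v x) \<bullet> (P *v (Q *v x)) > 0" by (rule Ppos)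
    then show ?thesis unfolding PQx by (simp add: inner_commute)
  qed
  with Qsym show ?thesis
    unfolding sym_pos_def_mat_def pos_def_mat_def Q_def[symmetric] by blast
qed

lemma nonincreasing_of_derivative_nonpos:
  fixes W :: "real \<Rightarrow> real"
  assumes "finite S" "a \<le> b" "continuous_on {a..b} W"
    and "\<And>s. s \<in> {a<..<b} - S \<Longrightarrow> (W has_real_derivative D s) (at s)"
    and "\<And>s. s \<in> {a<..<b} - S \<Longrightarrow> D s \<le> 0"
  shows "W b \<le> W a"
proof -
  define D' where "D' s = (if s \<in> {a<..<b} - S then D s else 0)" for s
  have "(D' has_integral (W b - W a)) {a..b}"
    using assms(4) by (intro fundamental_theorem_of_calculus_interior_strong[OF assms(1,2) _ assms(3)])
      (auto simp: D'_def has_real_derivative_iff_has_vector_derivative)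
  moreover have "D' s \<le> 0" for s
    using assms(5) by (simp add: D'_def)
  ultimately show ?thesis
    using has_integral_le[of D' "W b - W a" "{a..b}" "\<lambda>_. 0" 0] by (simp add: has_integral_0)
qed

lemma exp_decay_of_differential_inequality:
  fixes V D :: "real \<Rightarrow> real"
  assumes "finite S" "t0 \<le> t1" "continuous_on {t0..t1} V"
    and der: "\<And>t. t \<in> {t0..t1} - S \<Longrightarrow> (V has_vector_derivative D t) (at t within {t0..t1})"
    and le: "\<And>t. t \<in> {t0..t1} - S \<Longrightarrow> D t \<le> - c * V t"
    and t: "t \<in> {t0..t1}"
  shows "V t \<le> exp (- c * (t - t0)) * V t0"
proof -
  have "exp (c * t) * V t \<le> exp (c * t0) * V t0"
  proof (rule nonincreasing_of_derivative_nonpos[where W = "\<lambda>s. exp (c * s) * V s", OF assms(1)])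
    show "t0 \<le> t" using t by simp
    show "continuous_on {t0..t} (\<lambda>s. exp (c * s) * V s)"
      using t by (intro continuous_intros continuous_on_subset[OF assms(3)]) auto
  next
    fix s assume s: "s \<in> {t0<..<t} - S"
    then have s1: "s \<in> {t0<..<t1} - S" using t by auto
    then have "(V has_vector_derivative D s) (at s within {t0<..<t1})"
      by (intro has_vector_derivative_within_subset[OF der]) auto
    then have "(V has_vector_derivative D s) (at s)"
      using s1 at_within_open[of s "{t0<..<t1}"] by simp
    then have "(V has_real_derivative D s) (at s)"
      by (simp add: has_real_derivative_iff_has_vector_derivative)
    then show "((\<lambda>s. exp (c * s) * V s) has_real_derivative exp (c * s) * (c * V s + D s)) (at s)"
      by (auto intro!: derivative_eq_intros simp: algebra_simps)
    show "exp (c * s) * (c * V s + D s) \<le> 0"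
      using le[of s] s1 by (simp add: mult_nonneg_nonpos)
  qed
  then have "exp (- c * t) * exp (c * t) * V t \<le> exp (- c * t) * exp (c * t0) * V t0"
    by (simp add: mult.assoc)
  moreover have "exp (- c * t) * exp (c * t) = 1"
    by (simp add: exp_add[symmetric])
  moreover have "exp (- c * t) * exp (c * t0) = exp (- c * (t - t0))"
    by (simp add: exp_add[symmetric] algebra_simps)
  ultimately show ?thesis
    by (metis mult_1_left)
qed

lemma GUAS_of_exponential_bound:
  fixes F :: "real \<Rightarrow> 'n::euclidean_space \<Rightarrow> 'n"
  assumes K: "K > 0" and c: "c > 0"
    and bound: "\<And>t0 t1 x t. is_solution F t0 t1 x \<Longrightarrow> t \<in> {t0..t1} \<Longrightarrow>
          norm (x t) \<le> K * exp (- c * (t - t0)) * norm (x t0)"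
  shows "GUAS F"
proof -
  have small: "norm (x t) < r"
    if "is_solution F t0 t1 x" "t \<in> {t0..t1}" "norm (x t0) < a"
      and "K * exp (- c * (t - t0)) * a \<le> r" for t0 t1 x t a r
  proof -
    have "norm (x t) \<le> K * exp (- c * (t - t0)) * norm (x t0)" using bound that(1,2) .
    also have "\<dots> < K * exp (- c * (t - t0)) * a" using K that(3) by simp
    finally show ?thesis using that(4) by linarith
  qed
  have transient: "K * exp (- c * (t - t0)) * a \<le> K * a" if "t0 \<le> t" "a \<ge> 0" for t t0 a
  proof -
    have "exp (- c * (t - t0)) \<le> 1" using that c by (simp add: mult_nonneg_nonneg)
    then show ?thesis using that K by (simp add: mult_left_le_one_le)
  qed
  show ?thesis unfolding GUAS_def
  proof (intro conjI allI impI)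
    fix \<epsilon> :: real assume "\<epsilon> > 0"
    then show "\<exists>\<delta>>0. \<forall>t0 t1 x. is_solution F t0 t1 x \<and> norm (x t0) < \<delta> \<longrightarrow>
        (\<forall>t\<in>{t0..t1}. norm (x t) < \<epsilon>)"
      using K small transient[of _ _ "\<epsilon> / K"] by (intro exI[of _ "\<epsilon> / K"]) auto
  next
    fix a :: real assume "a > 0"
    then show "\<exists>C. \<forall>t0 t1 x. is_solution F t0 t1 x \<and> norm (x t0) < a \<longrightarrow>
        (\<forall>t\<in>{t0..t1}. norm (x t) < C)"
      using small transient[of _ _ a] by (intro exI[of _ "K * a"]) auto
  next
    fix a \<epsilon> :: real assume a: "a > 0" and e: "\<epsilon> > 0"
    define T where "T = max 0 (ln (K * a / \<epsilon>) / c)"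
    have "K * exp (- c * (t - t0)) * a \<le> \<epsilon>" if "t \<ge> t0 + T" for t t0
    proof -
      have "ln (K * a / \<epsilon>) / c \<le> t - t0"
        using that by (simp add: T_def)
      then have "ln (K * a / \<epsilon>) \<le> c * (t - t0)"
        using c by (simp add: divide_le_eq mult.commute)
      then have "exp (- c * (t - t0)) \<le> exp (- ln (K * a / \<epsilon>))"
        by simp
      also have "\<dots> = \<epsilon> / (K * a)"
        using K a e by (simp add: exp_minus)
      finally show ?thesis using K a by (simp add: field_simps)
    qed
    then show "\<exists>T\<ge>0. \<forall>t0 t1 x. is_solution F t0 t1 x \<and> norm (x t0) < a \<longrightarrow>
        (\<forall>t\<in>{t0..t1}. t \<ge> t0 + T \<longrightarrow> norm (x t) < \<epsilon>)"
      using small by (intro exI[of _ T]) (auto simp: T_def)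
  qed
qed

lemma quadratic_form_decay_along_solution:
  fixes F :: "real \<Rightarrow> real^'n \<Rightarrow> real^'n" and Q :: "real^'n^'n"
  assumes Qsym: "transpose Q = Q"
    and decrease: "\<And>t y. 2 * ((Q *v y) \<bullet> F t y) \<le> - c * (y \<bullet> (Q *v y))"
    and sol: "is_solution F t0 t1 x" and t: "t \<in> {t0..t1}"
  shows "x t \<bullet> (Q *v x t) \<le> exp (- c * (t - t0)) * (x t0 \<bullet> (Q *v x t0))"
proof -
  obtain S where S: "finite S" and t01: "t0 \<le> t1" and cont: "continuous_on {t0..t1} x"
    and der: "\<And>s. s \<in> {t0..t1} - S \<Longrightarrow> (x has_vector_derivative F s (x s)) (at s within {t0..t1})"
    using sol unfolding is_solution_def by blast
  show ?thesis
  proof (rule exp_decay_of_differential_inequality[where V = "\<lambda>s. x s \<bullet> (Q *v x s)"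
        and D = "\<lambda>s. 2 * ((Q *v x s) \<bullet> F s (x s))", OF S t01 _ _ _ t])
    show "continuous_on {t0..t1} (\<lambda>s. x s \<bullet> (Q *v x s))"
      by (intro continuous_intros cont
          continuous_on_compose[OF cont matrix_vector_mult_linear_continuous_on, unfolded o_def])
  next
    fix s assume s: "s \<in> {t0..t1} - S"
    have "((\<lambda>s. Q *v x s) has_vector_derivative Q *v F s (x s)) (at s within {t0..t1})"
      by (rule bounded_linear.has_vector_derivative[OF matrix_vector_mul_bounded_linear der[OF s]])
    then have "((\<lambda>s. x s \<bullet> (Q *v x s)) has_vector_derivative
        x s \<bullet> (Q *v F s (x s)) + F s (x s) \<bullet> (Q *v x s)) (at s within {t0..t1})"
      by (rule bounded_bilinear.has_vector_derivative[OF bounded_bilinear_inner der[OF s]])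
    moreover have "x s \<bullet> (Q *v F s (x s)) = (Q *v x s) \<bullet> F s (x s)"
      by (metis inner_matrix_vector_mult_transpose Qsym)
    ultimately show "((\<lambda>s. x s \<bullet> (Q *v x s)) has_vector_derivative
        2 * ((Q *v x s) \<bullet> F s (x s))) (at s within {t0..t1})"
      by (simp add: inner_commute)
  qed (rule decrease)
qed

lemma GUAS_of_quadratic_Lyapunov_function:
  fixes F :: "real \<Rightarrow> real^'n \<Rightarrow> real^'n" and Q :: "real^'n^'n"
  assumes Q: "sym_pos_def_mat Q" and c: "c > 0"
    and decrease: "\<And>t y. 2 * ((Q *v y) \<bullet> F t y) \<le> - c * (y \<bullet> (Q *v y))"
  shows "GUAS F"
proof -
  obtain a where a: "a > 0" "\<And>v. a * (norm v)^2 \<le> v \<bullet> (Q *v v)"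
    using pos_def_mat_quadratic_lower_bound Q unfolding sym_pos_def_mat_def by blast
  obtain b where b: "b > 0" "\<And>v. v \<bullet> (Q *v v) \<le> b * (norm v)^2"
    using quadratic_form_upper_bound by blast
  show ?thesis
  proof (rule GUAS_of_exponential_bound[of "sqrt (b / a)" "c / 2"])
    fix t0 t1 x t assume sol: "is_solution F t0 t1 x" and t: "t \<in> {t0..t1}"
    define e where "e = exp (- (c / 2) * (t - t0))"
    have "e^2 = exp (- c * (t - t0))"
      by (simp add: e_def power2_eq_square exp_add[symmetric])
    then have "a * (norm (x t))^2 \<le> e^2 * (x t0 \<bullet> (Q *v x t0))"
      using quadratic_form_decay_along_solution[OF _ decrease sol t] Q a(2)[of "x t"]
      unfolding sym_pos_def_mat_def by (metis order_trans)
    also have "\<dots> \<le> e^2 * (b * (norm (x t0))^2)"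
      by (intro mult_left_mono b(2)) simp
    finally have "(norm (x t))^2 \<le> e^2 * (b * (norm (x t0))^2) / a"
      using a(1) by (simp add: pos_le_divide_eq mult.commute)
    also have "\<dots> = (sqrt (b / a) * e * norm (x t0))^2"
      using a(1) b(1) by (simp add: power_mult_distrib)
    finally have "(norm (x t))^2 \<le> (sqrt (b / a) * e * norm (x t0))^2" .
    then show "norm (x t) \<le> sqrt (b / a) * exp (- (c / 2) * (t - t0)) * norm (x t0)"
      unfolding e_def by (rule power2_le_imp_le) (use a b in simp)
  qed (use a b c in auto)
qed

lemma matrix_add_rdistrib:
  fixes A B :: "real^'n^'m"
  shows "(A + B) ** C = A ** C + B ** C"
  by (vector matrix_matrix_mult_def sum.distrib[symmetric] field_simps)

lemma data_driven_closed_loop_eq: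
  fixes A :: "real^'n^'n" and B :: "real^'m^'n" and L :: "real^'p^'n"
    and U0 :: "real^'T^'m" and X0 X1 :: "real^'T^'n" and F0 :: "real^'T^'p"
    and Y :: "real^'n^'T" and Q :: "real^'n^'n"
  assumes "X1 = A ** X0 + B ** U0 + L ** F0" and "Q ** (X0 ** Y) = mat 1"
  shows "(A + B ** (U0 ** Y ** Q)) ** (X0 ** Y) = (X1 - L ** F0) ** Y"
proof -
  have "B ** (U0 ** Y ** Q) ** (X0 ** Y) = B ** U0 ** Y"
    using assms(2) by (metis matrix_mul_assoc matrix_mul_rid)
  then show ?thesis
    using assms(1) by (simp add: matrix_add_rdistrib matrix_mul_assoc)
qed

lemma quadratic_Lyapunov_derivative_eq:
  fixes P Q Acl M :: "real^'n^'n" and L :: "real^'p^'n" and H :: "real^'n^'p"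
  assumes PQ: "P ** Q = mat 1" and Psym: "transpose P = P"
    and AclP: "Acl ** P = M" and L: "L + P ** transpose H = 0"
  shows "2 * ((Q *v x) \<bullet> (Acl *v x + L *v y)) =
    (Q *v x) \<bullet> ((transpose M + M) *v (Q *v x)) - 2 * ((H *v x) \<bullet> y)"
proof -
  define w where "w = Q *v x"
  have x: "x = P *v w"
    using PQ by (simp add: w_def matrix_vector_mul_assoc)
  have "Acl *v x = M *v w"
    by (simp add: x matrix_vector_mul_assoc AclP)
  moreover have "w \<bullet> (L *v y) = - ((H *v x) \<bullet> y)"
  proof -
    have "L = - (P ** transpose H)"
      using L by (simp add: eq_neg_iff_add_eq_0)
    then have "L *v y = - (P *v (transpose H *v y))"
      by (simp only: uminus_matrix_vector_mult matrix_vector_mul_assoc)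
    moreover have "w \<bullet> (P *v (transpose H *v y)) = (H *v x) \<bullet> y"
      by (metis inner_matrix_vector_mult_transpose Psym x transpose_transpose)
    ultimately show ?thesis by simp
  qed
  moreover have "w \<bullet> (transpose M *v w) = w \<bullet> (M *v w)"
    by (metis inner_matrix_vector_mult_transpose transpose_transpose inner_commute)
  ultimately show ?thesis
    by (simp add: w_def[symmetric] inner_add_right matrix_vector_mult_add_rdistrib)
qed

lemma data_driven_dissipation_inequality:
  fixes A :: "real^'n^'n" and B :: "real^'m^'n"
    and L :: "real^'p^'n" and H :: "real^'n^'p"
    and U0 :: "real^'T^'m" and X0 :: "real^'T^'n" and X1 :: "real^'T^'n"
    and F0 :: "real^'T^'p" and Y :: "real^'n^'T"
  defines "Q \<equiv> matrix_inv (X0 ** Y)"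
  assumes data: "X1 = A ** X0 + B ** U0 + L ** F0"
    and pd: "sym_pos_def_mat (X0 ** Y)"
    and lmi: "neg_def_mat (transpose Y ** transpose (X1 - L ** F0) + (X1 - L ** F0) ** Y)"
    and eq: "L + X0 ** Y ** transpose H = 0"
  shows "\<exists>c>0. \<forall>x y. 0 \<le> (H *v x) \<bullet> y \<longrightarrow>
    2 * ((Q *v x) \<bullet> ((A + B ** (U0 ** Y ** Q)) *v x + L *v y)) \<le> - c * (x \<bullet> (Q *v x))"
proof -
  define P where "P = X0 ** Y"
  define M where "M = (X1 - L ** F0) ** Y"
  have PQ: "P ** Q = mat 1" and QP: "Q ** P = mat 1"
    using matrix_inv_mult_cancel pos_def_mat_invertible pd
    unfolding sym_pos_def_mat_def P_def Q_def by blast+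
  have Psym: "transpose P = P"
    using pd by (simp add: P_def sym_pos_def_mat_def)
  have "transpose M + M = transpose Y ** transpose (X1 - L ** F0) + (X1 - L ** F0) ** Y"
    by (simp add: M_def matrix_transpose_mul)
  then obtain \<alpha> where \<alpha>: "\<alpha> > 0" "\<And>v. v \<bullet> ((transpose M + M) *v v) \<le> - \<alpha> * (norm v)^2"
    using neg_def_mat_quadratic_upper_bound[OF lmi] by auto
  obtain \<beta> where \<beta>: "\<beta> > 0" "\<And>v. v \<bullet> (P *v v) \<le> \<beta> * (norm v)^2"
    using quadratic_form_upper_bound by blast
  have derivative_eq: "2 * ((Q *v x) \<bullet> ((A + B ** (U0 ** Y ** Q)) *v x + L *v y)) =
      (Q *v x) \<bullet> ((transpose M + M) *v (Q *v x)) - 2 * ((H *v x) \<bullet> y)" for x y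
    using quadratic_Lyapunov_derivative_eq[OF PQ Psym _ eq[folded P_def]]
      data_driven_closed_loop_eq[OF data QP[unfolded P_def]]
    by (simp add: P_def M_def)
  show ?thesis
  proof (intro exI[of _ "\<alpha> / \<beta>"] conjI allI impI)
    show "\<alpha> / \<beta> > 0" using \<alpha> \<beta> by simp
    fix x y assume passivity: "0 \<le> (H *v x) \<bullet> y"
    have "x \<bullet> (Q *v x) = (Q *v x) \<bullet> (P *v (Q *v x))"
      using PQ by (simp add: matrix_vector_mul_assoc inner_commute)
    then have "\<alpha> / \<beta> * (x \<bullet> (Q *v x)) \<le> \<alpha> * (norm (Q *v x))^2"
      using \<alpha>(1) \<beta> by (simp add: field_simps)
    then show "2 * ((Q *v x) \<bullet> ((A + B ** (U0 ** Y ** Q)) *v x + L *v y))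
        \<le> - (\<alpha> / \<beta>) * (x \<bullet> (Q *v x))"
      using derivative_eq[of x y] \<alpha>(2)[of "Q *v x"] passivity by simp
  qed
qed

theorem mainTheorem3:
  fixes A :: "real^'n^'n" and B :: "real^'m^'n"
    and L :: "real^'p^'n" and H :: "real^'n^'p"
    and U0 :: "real^'T^'m" and X0 :: "real^'T^'n" and X1 :: "real^'T^'n"
    and F0 :: "real^'T^'p" and Y :: "real^'n^'T"
  assumes data: "X1 = A ** X0 + B ** U0 + L ** F0"
    and pd: "sym_pos_def_mat (X0 ** Y)"
    and lmi: "neg_def_mat (transpose Y ** transpose (X1 - L ** F0) + (X1 - L ** F0) ** Y)"
    and eq: "L + X0 ** Y ** transpose H = 0"
  shows "\<forall>f :: real \<Rightarrow> real^'p \<Rightarrow> real^'p.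
           piecewise_continuous_in_t f \<and> locally_lipschitz_in_z f \<and>
           (\<forall>t z. z \<bullet> f t z \<ge> 0) \<longrightarrow>
           GUAS (\<lambda>t x. (A + B ** (U0 ** Y ** matrix_inv (X0 ** Y))) *v x + L *v f t (H *v x))"
proof (intro allI impI)
  fix f :: "real \<Rightarrow> real^'p \<Rightarrow> real^'p"
  assume "piecewise_continuous_in_t f \<and> locally_lipschitz_in_z f \<and> (\<forall>t z. z \<bullet> f t z \<ge> 0)"
  \<comment> \<open>Regularity of \<open>f\<close> only matters for existence of solutions; the estimate covers every solution.\<close>
  then have passivity: "\<And>t z. 0 \<le> z \<bullet> f t z" by blast
  obtain c where "c > 0" and dissipation: "\<And>x y. 0 \<le> (H *v x) \<bullet> y \<Longrightarrow>
      2 * ((matrix_inv (X0 ** Y) *v x) \<bullet>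
        ((A + B ** (U0 ** Y ** matrix_inv (X0 ** Y))) *v x + L *v y))
      \<le> - c * (x \<bullet> (matrix_inv (X0 ** Y) *v x))"
    using data_driven_dissipation_inequality[OF data pd lmi eq] by blast
  show "GUAS (\<lambda>t x. (A + B ** (U0 ** Y ** matrix_inv (X0 ** Y))) *v x + L *v f t (H *v x))"
    by (rule GUAS_of_quadratic_Lyapunov_function[OF sym_pos_def_mat_matrix_inv[OF pd] \<open>c > 0\<close>])
      (rule dissipation[OF passivity])
qed

end
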